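(* Assume the setting in the context (in particular Assumption (A)). Let $\rho>0$, $z_0\in V_f(\rho)$ and $\epsilon>0$, and run Algorithm $\mathcal{A}_*$ from $z_0$ with accuracy $\epsilon$, producing $z_j$, $s_j$, $n_j$, $m_j$ and $j_{out}$. Then: (i) for every $j\in\{0,\dots,j_{out}\}$ we have $z_j\in V_f(\rho)$, and the conclusions of the guarantee for $\mathcal{A}_d$ hold with $r=z_j$, $n=n_j$, $z=z_{j+1}$, $m=m_{j+1}$; namely $f(z_{j+1})\leq f(z_j)-\frac{1}{2L_f}\|g(z_j)\|_*^2$, $f(z_{j+1})-f^*\leq\left(\frac{\bar n_\rho}{m_{j+1}+1}\right)^2(f(z_j)-f^* )$, and $n_j\in(0,\lceil4\bar n_\rho\rceil]\Rightarrow m_{j+1}\in[n_j,\lceil4\bar n_\rho\rceil]$; (ii) the sequence $\{m_j\}$ is non-decreasing; in particular $m_j\leq n_j\leq m_{j+1}$ for all $j\in\{0,\dots,j_{out}\}$; (iii) $s_j\in(0,1]$ for all $j\in\{2,\dots,j_{out}\}$.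
   Context: Let $f:\mathbb{R}^n\to(-\infty,\infty]$ be a proper closed convex function such that the problem $f^*=\min_{x\in\mathbb{R}^n}f(x)$ is solvable. Let $\Omega_f=\{x: f(x)=f^*\}$, fix a norm $\|\cdot\|$ on $\mathbb{R}^n$ with dual norm $\|y\|_*=\sup\{y^Tz:\|z\|\leq 1\}$, and for $x\in\mathbb{R}^n$ let $\bar x=\arg\min_{z\in\Omega_f}\|x-z\|$. For $\rho\geq0$ let $V_f(\rho)=\{x: f(x)-f^*\leq\rho\}$. Let $\mathcal{A}$ be an iterative algorithm: for $x_0\in\mathrm{dom} f$ and integer $k\geq1$, $\mathcal{A}(x_0,k)$ denotes its $k$-th iterate started from $x_0$ (and $\mathcal{A}(x_0,0)=x_0$). Assumption (A): (i) for every $\rho>0$ there is $\mu_\rho>0$ with $f(x_0)-f^*\geq\frac{\mu_\rho}{2}\|x_0-\bar x_0\|^2$ for all $x_0\in V_f(\rho)$; (ii) there exist $a_f>0$, $L_f>0$ and $g:\mathbb{R}^n\to\mathbb{R}^n$ with $g(x)=0\iff x\in\Omega_f$ such that for every $x_0\in\mathrm{dom} f$: $f(\mathcal{A}(x_0,1))\leq f(x_0)-\frac{1}{2L_f}\|g(x_0)\|_*^2$ and $f(\mathcal{A}(x_0,k))-f^*\leq\frac{a_f}{(k+1)^2}\|x_0-\bar x_0\|^2$ for all $k\geq1$; (iii) $\bar n_\rho:=\max\{\frac12,\sqrt{2a_f/\mu_\rho}\}$. Procedure $\mathcal{A}_d(r,n)$ (input $r\in\mathrm{dom} f$, $n\in\mathbb{R}$):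 set $x_0=r$, $k=0$. Repeat: $k\gets k+1$; set $x_k=\mathcal{A}(x_0,k)$ if $f(\mathcal{A}(x_0,k))\leq f(x_{k-1})$, and $x_k=x_{k-1}$ otherwise; $\ell=\lfloor k/2\rfloor$; until $k\geq n$ and $f(x_\ell)-f(x_k)\leq\frac13(f(x_0)-f(x_\ell))$. Output $z=x_k$, $m=k$. Algorithm $\mathcal{A}_*(z_0)$ (input $z_0\in\mathrm{dom} f$, $\epsilon>0$): set $m_0=1$, $m_{-1}=1$, $j=-1$. Repeat: $j\gets j+1$; $s_j=\sqrt{\frac{f(z_{j-1})-f(z_j)}{f(z_{j-2})-f(z_j)}}$ if $j\geq2$ and $s_j=0$ otherwise; $n_j=\max\{m_j,4s_jm_{j-1}\}$; $[z_{j+1},m_{j+1}]=\mathcal{A}_d(z_j,n_j)$; until $f(z_j)-f(z_{j+1})\leq\epsilon$. Output $z_{out}=z_{j+1}$, $j_{out}=j$. *)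

theory Defs
  imports "HOL-Analysis.Analysis" "HOL-Library.Extended_Real"
begin

text \<open>Extended-valued functions f : R^n -> (-inf, inf] are modelled as maps into ereal.\<close>

definition proper_fun :: "('a \<Rightarrow> ereal) \<Rightarrow> bool" where
  "proper_fun f \<longleftrightarrow> (\<forall>x. f x \<noteq> -\<infinity>) \<and> (\<exists>x. f x \<noteq> \<infinity>)"

definition closed_fun :: "('a::topological_space \<Rightarrow> ereal) \<Rightarrow> bool" where
  "closed_fun f \<longleftrightarrow> closed {p :: 'a \<times> real. f (fst p) \<le> ereal (snd p)}"

definition convex_fun :: "('a::real_vector \<Rightarrow> ereal) \<Rightarrow> bool" where
  "convex_fun f \<longleftrightarrow> (\<forall>x y u. 0 \<le> u \<and> u \<le> 1 \<longrightarrow>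
      f (u *\<^sub>R x + (1 - u) *\<^sub>R y) \<le> ereal u * f x + ereal (1 - u) * f y)"

definition efdom :: "('a \<Rightarrow> ereal) \<Rightarrow> 'a set" where
  "efdom f = {x. f x < \<infinity>}"

definition is_norm :: "('a::real_vector \<Rightarrow> real) \<Rightarrow> bool" where
  "is_norm N \<longleftrightarrow> (\<forall>x. N x = 0 \<longleftrightarrow> x = 0) \<and> (\<forall>x y. N (x + y) \<le> N x + N y)
     \<and> (\<forall>c x. N (c *\<^sub>R x) = \<bar>c\<bar> * N x)"

definition dual_norm :: "('a::real_inner \<Rightarrow> real) \<Rightarrow> 'a \<Rightarrow> real" where
  "dual_norm N y = Sup {y \<bullet> z | z. N z \<le> 1}"

definition optset :: "('a \<Rightarrow> ereal) \<Rightarrow> real \<Rightarrow> 'a set" where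
  "optset f fstar = {x. f x = ereal fstar}"

definition dist_opt :: "('a::real_vector \<Rightarrow> real) \<Rightarrow> ('a \<Rightarrow> ereal) \<Rightarrow> real \<Rightarrow> 'a \<Rightarrow> real" where
  "dist_opt N f fstar x = Inf ((\<lambda>z. N (x - z)) ` optset f fstar)"

definition sublevel :: "('a \<Rightarrow> ereal) \<Rightarrow> real \<Rightarrow> real \<Rightarrow> 'a set" where
  "sublevel f fstar \<rho> = {x. f x - ereal fstar \<le> ereal \<rho>}"

primrec Ad_seq :: "('a \<Rightarrow> ereal) \<Rightarrow> ('a \<Rightarrow> nat \<Rightarrow> 'a) \<Rightarrow> 'a \<Rightarrow> nat \<Rightarrow> 'a" where
  "Ad_seq f A r 0 = r"
| "Ad_seq f A r (Suc k) =
     (if f (A r (Suc k)) \<le> f (Ad_seq f A r k) then A r (Suc k) else Ad_seq f A r k)"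

definition Ad_stop :: "('a \<Rightarrow> ereal) \<Rightarrow> ('a \<Rightarrow> nat \<Rightarrow> 'a) \<Rightarrow> 'a \<Rightarrow> real \<Rightarrow> nat \<Rightarrow> bool" where
  "Ad_stop f A r n k \<longleftrightarrow> 1 \<le> k \<and> n \<le> real k \<and>
     f (Ad_seq f A r (k div 2)) - f (Ad_seq f A r k)
       \<le> ereal (1/3) * (f r - f (Ad_seq f A r (k div 2)))"

definition Ad_m :: "('a \<Rightarrow> ereal) \<Rightarrow> ('a \<Rightarrow> nat \<Rightarrow> 'a) \<Rightarrow> 'a \<Rightarrow> real \<Rightarrow> nat" where
  "Ad_m f A r n = (LEAST k. Ad_stop f A r n k)"

definition Ad_z :: "('a \<Rightarrow> ereal) \<Rightarrow> ('a \<Rightarrow> nat \<Rightarrow> 'a) \<Rightarrow> 'a \<Rightarrow> real \<Rightarrow> 'a" where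
  "Ad_z f A r n = Ad_seq f A r (Ad_m f A r n)"

text \<open>Algorithm A_*(z_0): astar j = (z_j, m_j). Here j = 0 .. ; m_0 = m_{-1} = 1, s_0 = s_1 = 0.\<close>

fun astar :: "('a \<Rightarrow> ereal) \<Rightarrow> ('a \<Rightarrow> nat \<Rightarrow> 'a) \<Rightarrow> 'a \<Rightarrow> nat \<Rightarrow> 'a \<times> nat" where
  "astar f A z0 0 = (z0, 1)"
| "astar f A z0 (Suc j) =
     (let zj = fst (astar f A z0 j);
          mj = snd (astar f A z0 j);
          s = (if 2 \<le> j then
                 sqrt ((real_of_ereal (f (fst (astar f A z0 (j - 1)))) - real_of_ereal (f zj)) /
                       (real_of_ereal (f (fst (astar f A z0 (j - 2)))) - real_of_ereal (f zj)))
               else 0);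
          mj1 = (if j = 0 then 1 else snd (astar f A z0 (j - 1)));
          n = max (real mj) (4 * s * real mj1)
      in (Ad_z f A zj n, Ad_m f A zj n))"

definition astar_z where "astar_z f A z0 j = fst (astar f A z0 j)"
definition astar_m where "astar_m f A z0 j = snd (astar f A z0 j)"

definition astar_s :: "('a \<Rightarrow> ereal) \<Rightarrow> ('a \<Rightarrow> nat \<Rightarrow> 'a) \<Rightarrow> 'a \<Rightarrow> nat \<Rightarrow> real" where
  "astar_s f A z0 j = (if 2 \<le> j then
      sqrt ((real_of_ereal (f (astar_z f A z0 (j - 1))) - real_of_ereal (f (astar_z f A z0 j))) /
            (real_of_ereal (f (astar_z f A z0 (j - 2))) - real_of_ereal (f (astar_z f A z0 j))))
      else 0)"

definition astar_n :: "('a \<Rightarrow> ereal) \<Rightarrow> ('a \<Rightarrow> nat \<Rightarrow> 'a) \<Rightarrow> 'a \<Rightarrow> nat \<Rightarrow> real" where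
  "astar_n f A z0 j = max (real (astar_m f A z0 j))
      (4 * astar_s f A z0 j * (if j = 0 then 1 else real (astar_m f A z0 (j - 1))))"

definition astar_stop :: "('a \<Rightarrow> ereal) \<Rightarrow> ('a \<Rightarrow> nat \<Rightarrow> 'a) \<Rightarrow> 'a \<Rightarrow> real \<Rightarrow> nat \<Rightarrow> bool" where
  "astar_stop f A z0 \<epsilon> j \<longleftrightarrow> f (astar_z f A z0 j) - f (astar_z f A z0 (Suc j)) \<le> ereal \<epsilon>"

definition astar_jout :: "('a \<Rightarrow> ereal) \<Rightarrow> ('a \<Rightarrow> nat \<Rightarrow> 'a) \<Rightarrow> 'a \<Rightarrow> real \<Rightarrow> nat" where
  "astar_jout f A z0 \<epsilon> = (LEAST j. astar_stop f A z0 \<epsilon> j)"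

end

theory Submission imports Defs begin

(* Assumption (A) turns the O(1/k^2) rate of the algorithm A into the relative bound
   f(A(r,k)) - fstar <= (nbar/(k+1))^2 (f(r) - fstar) on the sublevel set V_f(rho), because
   a ||r - bar r||^2 <= (2a/mu) (f(r) - fstar) <= nbar^2 (f(r) - fstar).
   Under this bound the stopping test of A_d holds at every k >= max(n, 4 nbar), since then
   f(x_(k div 2)) - fstar <= (f(r) - fstar)/4 while f(x_k) >= fstar.  The outer iterates decrease f, hence stay in
   V_f(rho); as f >= fstar, decreases larger than epsilon cannot go on forever, and before
   j_out they keep the ratio under the square root defining s_j inside (0,1]. *)

lemma f_Ad_seq_antimono:
  assumes "k \<le> k'" shows "f (Ad_seq f A r k') \<le> f (Ad_seq f A r k)"
  by (rule lift_Suc_antimono_le[OF _ assms]) simp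

lemma f_Ad_seq_le_iterate:
  assumes "1 \<le> k" shows "f (Ad_seq f A r k) \<le> f (A r k)"
  using assms by (cases k) auto

lemma Ad_stop_Ad_m:
  assumes "Ad_stop f A r n k" shows "Ad_stop f A r n (Ad_m f A r n)"
  unfolding Ad_m_def using assms by (rule LeastI)

lemma Ad_m_le:
  assumes "Ad_stop f A r n k" shows "Ad_m f A r n \<le> k"
  unfolding Ad_m_def using assms by (rule Least_le)

locale Ad_rate =
  fixes f :: "'a \<Rightarrow> ereal" and A :: "'a \<Rightarrow> nat \<Rightarrow> 'a" and r :: 'a and fstar D nb :: real
  assumes lower_bound: "\<And>x. ereal fstar \<le> f x"
    and f_r: "f r = ereal (fstar + D)"
    and nb_ge: "1/2 \<le> nb"
    and rate: "\<And>k. 1 \<le> k \<Longrightarrow> f (A r k) \<le> ereal (fstar + (nb / (real k + 1))\<^sup>2 * D)"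
begin

lemma f_Ad_seq_real:
  obtains u where "f (Ad_seq f A r k) = ereal u" "fstar \<le> u"
proof -
  have "f (Ad_seq f A r k) \<le> f r"
    using f_Ad_seq_antimono[of 0 k f A r] by simp
  then show ?thesis
    using that lower_bound[of "Ad_seq f A r k"] f_r by (cases "f (Ad_seq f A r k)") auto
qed

lemma f_Ad_seq_rate:
  assumes "1 \<le> k" shows "f (Ad_seq f A r k) \<le> ereal (fstar + (nb / (real k + 1))\<^sup>2 * D)"
  using f_Ad_seq_le_iterate[OF assms] rate[OF assms] by (rule order_trans)

lemma Ad_stop_if_large:
  assumes K_nb: "4 * nb \<le> real K" and K_n: "n \<le> real K"
  shows "Ad_stop f A r n K"
proof -
  define l where "l = K div 2"
  have "2 \<le> K" using K_nb nb_ge by linarith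
  then have l: "1 \<le> l" "2 * nb \<le> real l + 1" using K_nb unfolding l_def by linarith+
  have "(nb / (real l + 1))\<^sup>2 \<le> (1/2)\<^sup>2"
    using l nb_ge by (intro power_mono) (auto simp: divide_simps)
  moreover have "0 \<le> D" using lower_bound[of r] f_r by simp
  ultimately have "(nb / (real l + 1))\<^sup>2 * D \<le> (1/2)\<^sup>2 * D" by (rule mult_right_mono)
  then have half: "f (Ad_seq f A r l) \<le> ereal (fstar + D / 4)"
    by (intro order_trans[OF f_Ad_seq_rate[OF l(1)]]) (simp add: power_divide)
  obtain u where "f (Ad_seq f A r l) = ereal u" by (rule f_Ad_seq_real)
  moreover obtain v where "f (Ad_seq f A r K) = ereal v" "fstar \<le> v" by (rule f_Ad_seq_real)
  \<comment> \<open>the test reads u - v \<le> (fstar + D - u) / 3, which holds once u - fstar \<le> D / 4\<close>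
  ultimately show ?thesis
    using half \<open>2 \<le> K\<close> K_n unfolding Ad_stop_def l_def[symmetric] f_r by simp
qed

lemma Ad_stop_exists: "\<exists>k. Ad_stop f A r n k"
proof
  show "Ad_stop f A r n (nat \<lceil>max n (4 * nb)\<rceil>)"
    by (rule Ad_stop_if_large) linarith+
qed

lemma Ad_m_ge: "1 \<le> Ad_m f A r n" "n \<le> real (Ad_m f A r n)"
  using Ad_stop_Ad_m[of f A r n] Ad_stop_exists unfolding Ad_stop_def by auto

lemma Ad_m_le_ceiling:
  assumes "n \<le> real_of_int \<lceil>4 * nb\<rceil>"
  shows "real (Ad_m f A r n) \<le> real_of_int \<lceil>4 * nb\<rceil>"
proof -
  have "Ad_stop f A r n (nat \<lceil>4 * nb\<rceil>)"
    using assms nb_ge by (intro Ad_stop_if_large) auto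
  then have "Ad_m f A r n \<le> nat \<lceil>4 * nb\<rceil>" by (rule Ad_m_le)
  then show ?thesis using nb_ge by linarith
qed

lemma f_Ad_z_le_first_step: "f (Ad_z f A r n) \<le> f (A r 1)"
proof -
  have "f (Ad_seq f A r (Ad_m f A r n)) \<le> f (Ad_seq f A r 1)"
    by (rule f_Ad_seq_antimono[OF Ad_m_ge(1)])
  also have "\<dots> \<le> f (A r 1)" by (rule f_Ad_seq_le_iterate) simp
  finally show ?thesis unfolding Ad_z_def .
qed

lemma f_Ad_z_rate:
  "f (Ad_z f A r n) - ereal fstar \<le> ereal ((nb / (real (Ad_m f A r n) + 1))\<^sup>2) * (f r - ereal fstar)"
proof -
  obtain u where "f (Ad_z f A r n) = ereal u"
    unfolding Ad_z_def by (rule f_Ad_seq_real)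
  with f_Ad_seq_rate[OF Ad_m_ge(1)[of n]] show ?thesis
    unfolding Ad_z_def f_r by (simp add: algebra_simps)
qed

end

lemma Ad_rate_of_quadratic_growth:
  fixes f :: "'a \<Rightarrow> ereal" and d \<mu> a :: real
  assumes lower_bound: "\<And>x. ereal fstar \<le> f x" and finite: "f r < \<infinity>"
    and growth: "ereal (\<mu> / 2 * d\<^sup>2) \<le> f r - ereal fstar"
    and rate: "\<And>k. 1 \<le> k \<Longrightarrow> f (A r k) - ereal fstar \<le> ereal (a / (real k + 1)\<^sup>2 * d\<^sup>2)"
    and \<mu>_pos: "0 < \<mu>" and a_pos: "0 < a"
  shows "Ad_rate f A r fstar (real_of_ereal (f r) - fstar) (max (1/2) (sqrt (2 * a / \<mu>)))"
proof -
  define D where "D = real_of_ereal (f r) - fstar"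
  define nb where "nb = max (1/2) (sqrt (2 * a / \<mu>))"
  have f_r: "f r = ereal (fstar + D)"
    unfolding D_def using lower_bound[of r] finite by (cases "f r") auto
  have D_nonneg: "0 \<le> D" using lower_bound[of r] f_r by simp
  have nb_sq: "2 * a / \<mu> \<le> nb\<^sup>2"
  proof -
    have "sqrt (2 * a / \<mu>) \<le> nb" unfolding nb_def by simp
    then have "(sqrt (2 * a / \<mu>))\<^sup>2 \<le> nb\<^sup>2" by (intro power_mono) (use a_pos \<mu>_pos in auto)
    then show ?thesis using a_pos \<mu>_pos by simp
  qed
  have "a * d\<^sup>2 = (2 * a / \<mu>) * (\<mu> / 2 * d\<^sup>2)" using \<mu>_pos by simp
  also have "\<dots> \<le> (2 * a / \<mu>) * D" using growth f_r a_pos \<mu>_pos by (intro mult_left_mono) auto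
  also have "\<dots> \<le> nb\<^sup>2 * D" using nb_sq D_nonneg by (rule mult_right_mono)
  finally have "a * d\<^sup>2 \<le> nb\<^sup>2 * D" .
  then have decay: "a / (real k + 1)\<^sup>2 * d\<^sup>2 \<le> (nb / (real k + 1))\<^sup>2 * D" for k
    by (simp add: power_divide divide_right_mono)
  have "f (A r k) \<le> ereal (fstar + (nb / (real k + 1))\<^sup>2 * D)" if "1 \<le> k" for k
    using rate[OF that] decay[of k] lower_bound[of "A r k"] by (cases "f (A r k)") auto
  then show ?thesis
    unfolding D_def[symmetric] nb_def[symmetric] using lower_bound f_r
    by (intro Ad_rate.intro) (auto simp: nb_def)
qed

lemma astar_z_0: "astar_z f A z0 0 = z0"
  by (simp add: astar_z_def)

lemma astar_z_Suc: "astar_z f A z0 (Suc j) = Ad_z f A (astar_z f A z0 j) (astar_n f A z0 j)"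
  by (simp add: astar_z_def astar_n_def astar_s_def astar_m_def Let_def)

lemma astar_m_Suc: "astar_m f A z0 (Suc j) = Ad_m f A (astar_z f A z0 j) (astar_n f A z0 j)"
  by (simp add: astar_z_def astar_n_def astar_s_def astar_m_def Let_def)

lemma real_astar_m_le_n: "real (astar_m f A z0 j) \<le> astar_n f A z0 j"
  by (simp add: astar_n_def)

lemma f_astar_z_antimono:
  assumes "i \<le> j" shows "f (astar_z f A z0 j) \<le> f (astar_z f A z0 i)"
proof (rule lift_Suc_antimono_le[OF _ assms])
  show "f (astar_z f A z0 (Suc j)) \<le> f (astar_z f A z0 j)" for j
    unfolding astar_z_Suc Ad_z_def using f_Ad_seq_antimono[of 0] by simp
qed

lemma sublevel_subset_efdom: "sublevel f fstar \<rho> \<subseteq> efdom f"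
  unfolding sublevel_def efdom_def by auto

lemma astar_z_sublevel:
  assumes "z0 \<in> sublevel f fstar \<rho>" shows "astar_z f A z0 j \<in> sublevel f fstar \<rho>"
  using assms f_astar_z_antimono[of 0 j f A z0] unfolding sublevel_def astar_z_0
  by (auto intro: order_trans ereal_minus_mono)

lemma f_astar_z_real:
  assumes "\<And>x. ereal fstar \<le> f x" and "f z0 < \<infinity>"
  shows "f (astar_z f A z0 j) = ereal (real_of_ereal (f (astar_z f A z0 j)))"
  using assms(1)[of "astar_z f A z0 j"] assms(2) f_astar_z_antimono[of 0 j f A z0]
  unfolding astar_z_0 by (cases "f (astar_z f A z0 j)") auto

lemma ex_small_decrease:
  fixes u :: "nat \<Rightarrow> real"
  assumes "\<And>j. b \<le> u j" and "0 < \<epsilon>"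
  shows "\<exists>j. u j - u (Suc j) \<le> \<epsilon>"
proof (rule ccontr)
  assume "\<not> ?thesis"
  then have step: "\<epsilon> < u j - u (Suc j)" for j by (simp add: not_le)
  have bound: "u j \<le> u 0 - real j * \<epsilon>" for j
  proof (induction j)
    case (Suc j)
    then show ?case using step[of j] by (simp add: algebra_simps)
  qed simp
  obtain j where "u 0 - b < real j * \<epsilon>"
    using reals_Archimedean3[OF assms(2)] by blast
  then show False using bound[of j] assms(1)[of j] by linarith
qed

lemma astar_stop_exists:
  assumes lower_bound: "\<And>x. ereal fstar \<le> f x" and "f z0 < \<infinity>" and "0 < \<epsilon>"
  shows "\<exists>j. astar_stop f A z0 \<epsilon> j"
proof -
  define F where "F j = real_of_ereal (f (astar_z f A z0 j))" for j
  have F: "f (astar_z f A z0 j) = ereal (F j)" for j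
    unfolding F_def using assms(1,2) by (rule f_astar_z_real)
  have "fstar \<le> F j" for j using lower_bound F by (metis ereal_less_eq(3))
  then obtain j where "F j - F (Suc j) \<le> \<epsilon>" using ex_small_decrease assms(3) by blast
  then have "astar_stop f A z0 \<epsilon> j" unfolding astar_stop_def F by simp
  then show ?thesis ..
qed

lemma astar_s_bounds:
  assumes "\<And>x. ereal fstar \<le> f x" and "f z0 < \<infinity>" and "0 < \<epsilon>"
    and "2 \<le> j" and "j \<le> astar_jout f A z0 \<epsilon>"
  shows "0 < astar_s f A z0 j \<and> astar_s f A z0 j \<le> 1"
proof -
  define F where "F j = real_of_ereal (f (astar_z f A z0 j))" for j
  have F: "f (astar_z f A z0 j) = ereal (F j)" for j
    unfolding F_def using assms(1,2) by (rule f_astar_z_real)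
  have "\<not> astar_stop f A z0 \<epsilon> (j - 1)"
    using assms(4,5) unfolding astar_jout_def by (intro not_less_Least) simp
  then have gap: "\<epsilon> < F (j - 1) - F j" unfolding astar_stop_def F using assms(4) by simp
  have "F (j - 1) \<le> F (j - 2)" using f_astar_z_antimono[of "j - 2" "j - 1" f A z0] F by simp
  then show ?thesis unfolding astar_s_def F_def[symmetric] using gap assms(3,4) by simp
qed

theorem mainTheorem3:
  fixes f :: "real^'n \<Rightarrow> ereal" and fstar :: real
    and N :: "real^'n \<Rightarrow> real"
    and A :: "real^'n \<Rightarrow> nat \<Rightarrow> real^'n"
    and g :: "real^'n \<Rightarrow> real^'n"
    and \<mu> :: "real \<Rightarrow> real" and a L \<rho> \<epsilon> :: real and z0 :: "real^'n"
  assumes f_proper: "proper_fun f" and f_closed: "closed_fun f" and f_convex: "convex_fun f"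
    and fstar_min: "\<forall>x. ereal fstar \<le> f x" and fstar_att: "\<exists>x. f x = ereal fstar"
    and N_norm: "is_norm N"
    and A0: "\<forall>x. A x 0 = x"
    and A_i: "\<forall>r>0. \<mu> r > 0 \<and> (\<forall>x\<in>sublevel f fstar r.
                 f x - ereal fstar \<ge> ereal (\<mu> r / 2 * (dist_opt N f fstar x)\<^sup>2))"
    and a_pos: "a > 0" and L_pos: "L > 0"
    and g_zero: "\<forall>x. g x = 0 \<longleftrightarrow> x \<in> optset f fstar"
    and A_descent: "\<forall>x\<in>efdom f. f (A x 1) \<le> f x - ereal (1 / (2 * L) * (dual_norm N (g x))\<^sup>2)"
    and A_rate: "\<forall>x\<in>efdom f. \<forall>k\<ge>1.
                  f (A x k) - ereal fstar \<le> ereal (a / (real k + 1)\<^sup>2 * (dist_opt N f fstar x)\<^sup>2)"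
    and rho_pos: "\<rho> > 0" and z0_in: "z0 \<in> sublevel f fstar \<rho>" and eps_pos: "\<epsilon> > 0"
  shows
    "let nbar = max (1/2) (sqrt (2 * a / \<mu> \<rho>));
         z = astar_z f A z0; m = astar_m f A z0; n = astar_n f A z0; s = astar_s f A z0;
         jout = astar_jout f A z0 \<epsilon>
     in
       \<comment> \<open>(0) the run is well defined: A_* stops, and every call of A_d stops\<close>
       (\<exists>j. astar_stop f A z0 \<epsilon> j) \<and>
       (\<forall>j\<le>jout. \<exists>k. Ad_stop f A (z j) (n j) k) \<and>
       \<comment> \<open>(i)\<close>
       (\<forall>j\<le>jout.
          z j \<in> sublevel f fstar \<rho> \<and>
          f (z (Suc j)) \<le> f (z j) - ereal (1 / (2 * L) * (dual_norm N (g (z j)))\<^sup>2) \<and>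
          f (z (Suc j)) - ereal fstar \<le> ereal ((nbar / (real (m (Suc j)) + 1))\<^sup>2) * (f (z j) - ereal fstar) \<and>
          (0 < n j \<and> n j \<le> real_of_int \<lceil>4 * nbar\<rceil> \<longrightarrow>
             n j \<le> real (m (Suc j)) \<and> real (m (Suc j)) \<le> real_of_int \<lceil>4 * nbar\<rceil>)) \<and>
       \<comment> \<open>(ii)\<close>
       (\<forall>i j. i \<le> j \<and> j \<le> Suc jout \<longrightarrow> m i \<le> m j) \<and>
       (\<forall>j\<le>jout. real (m j) \<le> n j \<and> n j \<le> real (m (Suc j))) \<and>
       \<comment> \<open>(iii)\<close>
       (\<forall>j. 2 \<le> j \<and> j \<le> jout \<longrightarrow> 0 < s j \<and> s j \<le> 1)"
proof -
  define nbar where "nbar = max (1/2) (sqrt (2 * a / \<mu> \<rho>))"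
  define z where "z = astar_z f A z0"
  define m where "m = astar_m f A z0"
  define n where "n = astar_n f A z0"
  note lower_bound = fstar_min[rule_format]
  have f_z0: "f z0 < \<infinity>" using z0_in sublevel_subset_efdom[of f fstar \<rho>] unfolding efdom_def by blast
  have sub: "z j \<in> sublevel f fstar \<rho>" for j unfolding z_def using z0_in by (rule astar_z_sublevel)
  then have dom: "z j \<in> efdom f" for j using sublevel_subset_efdom[of f fstar \<rho>] by blast
  have rate: "Ad_rate f A (z j) fstar (real_of_ereal (f (z j)) - fstar) nbar" for j
    unfolding nbar_def using lower_bound dom[of j] A_i rho_pos sub[of j] A_rate a_pos
    by (intro Ad_rate_of_quadratic_growth) (auto simp: efdom_def)
  have z_Suc: "z (Suc j) = Ad_z f A (z j) (n j)" for j unfolding z_def n_def by (rule astar_z_Suc)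
  have m_Suc: "m (Suc j) = Ad_m f A (z j) (n j)" for j unfolding z_def n_def m_def by (rule astar_m_Suc)
  have descent: "f (z (Suc j)) \<le> f (z j) - ereal (1 / (2 * L) * (dual_norm N (g (z j)))\<^sup>2)" for j
    unfolding z_Suc using Ad_rate.f_Ad_z_le_first_step[OF rate] A_descent dom by (meson order_trans)
  have n_le_m: "n j \<le> real (m (Suc j))" for j
    unfolding m_Suc using Ad_rate.Ad_m_ge(2)[OF rate] .
  have m_le_n: "real (m j) \<le> n j" for j unfolding m_def n_def by (rule real_astar_m_le_n)
  have m_mono: "m i \<le> m j" if "i \<le> j" for i j
    using lift_Suc_mono_le[of m, OF _ that] n_le_m m_le_n by (meson of_nat_le_iff order_trans)
  have contraction:
    "f (z (Suc j)) - ereal fstar \<le> ereal ((nbar / (real (m (Suc j)) + 1))\<^sup>2) * (f (z j) - ereal fstar)"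
    for j unfolding z_Suc m_Suc by (rule Ad_rate.f_Ad_z_rate[OF rate])
  have m_le_ceiling: "real (m (Suc j)) \<le> real_of_int \<lceil>4 * nbar\<rceil>"
    if "n j \<le> real_of_int \<lceil>4 * nbar\<rceil>" for j
    unfolding m_Suc using that by (rule Ad_rate.Ad_m_le_ceiling[OF rate])
  have Ad_stops: "\<exists>k. Ad_stop f A (z j) (n j) k" for j by (rule Ad_rate.Ad_stop_exists[OF rate])
  show ?thesis
    unfolding Let_def nbar_def[symmetric] z_def[symmetric] m_def[symmetric] n_def[symmetric]
    using astar_stop_exists[where f = f, OF lower_bound f_z0 eps_pos]
      astar_s_bounds[where f = f, OF lower_bound f_z0 eps_pos]
      Ad_stops sub descent contraction n_le_m m_le_n m_le_ceiling m_mono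
    by blast
qed

end
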